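(* Let $X$ be a locally compact metrizable space that is not compact, and suppose that $\operatorname{Homeo}_{\overline U}(X)$ is not locally compact for every non-empty open set $U\subseteq X$ with $\overline U$ compact. Then the family $\{\operatorname{Homeo}_K(X)\}_{K\in\mathscr K(X)}$ does not satisfy ACP.
   Context: For a compact subset $K$ of a locally compact Hausdorff space $X$, $\operatorname{Homeo}_K(X)$ denotes the group of homeomorphisms $h$ of $X$ with $h(x)=x$ for all $x\in X\setminus K$, equipped with the compact-open topology (it is a topological group). $\mathscr K(X)$ is the set of compact subsets of $X$ ordered by inclusion, and the family has inclusions as bonding maps. For a directed family $\{G_\alpha\}$ of topological groups with inclusions that are closed embeddings as bonding maps and union $G$, the colimit space topology is $\mathscr T=\{U\subseteq G\mid U\cap G_\alpha\text{ open in }G_\alpha\ \forall\alpha\}$; the family satisfies ACP if $(G,\mathscr T)$ is a topological group (equivalently, $\mathscr T$ equals the finest group topology making all inclusions continuous). *)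

theory Defs
  imports "HOL-Analysis.Analysis"
begin

text \<open>Functions are
  normalised to be the identity outside the carrier of X, so each homeomorphism
  is represented by exactly one HOL function.\<close>
definition Homeo_on :: "'a topology \<Rightarrow> 'a set \<Rightarrow> ('a \<Rightarrow> 'a) set" where
  "Homeo_on X K = {h. homeomorphic_map X X h \<and> (\<forall>x \<in> topspace X - K. h x = x)
                       \<and> (\<forall>x. x \<notin> topspace X \<longrightarrow> h x = x)}"

text \<open>Compact-open topology on a set S of self-maps of X (subbasis: maps sending
  a compact C into an open U). With C = {} the subbasis covers S.\<close>
definition compact_open :: "'a topology \<Rightarrow> ('a \<Rightarrow> 'a) set \<Rightarrow> ('a \<Rightarrow> 'a) topology" where
  "compact_open X S = topology_generated_by
     {{f \<in> S. f ` C \<subseteq> U} | C U. compactin X C \<and> openin X U}"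

definition homeo_inv :: "'a topology \<Rightarrow> ('a \<Rightarrow> 'a) \<Rightarrow> ('a \<Rightarrow> 'a)" where
  "homeo_inv X h = (\<lambda>y. if y \<in> topspace X then inv_into (topspace X) h y else y)"

definition homeo_topological_group :: "'a topology \<Rightarrow> ('a \<Rightarrow> 'a) topology \<Rightarrow> bool" where
  "homeo_topological_group X T \<longleftrightarrow>
     continuous_map (prod_topology T T) T (\<lambda>(f, g). f \<circ> g) \<and>
     continuous_map T T (homeo_inv X)"

definition Homeo_c :: "'a topology \<Rightarrow> ('a \<Rightarrow> 'a) set" where
  "Homeo_c X = (\<Union>K \<in> {K. compactin X K}. Homeo_on X K)"

definition colimit_topology :: "'a topology \<Rightarrow> ('a \<Rightarrow> 'a) topology" where
  "colimit_topology X = topology (\<lambda>U. U \<subseteq> Homeo_c X \<and>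
     (\<forall>K. compactin X K \<longrightarrow> openin (compact_open X (Homeo_on X K)) (U \<inter> Homeo_on X K)))"

definition Homeo_ACP :: "'a topology \<Rightarrow> bool" where
  "Homeo_ACP X \<longleftrightarrow> homeo_topological_group X (colimit_topology X)"

end

(*
  On a compact K the compact-open topology of Homeo_K(X) is the topology of the sup
  metric, and failure of local compactness yields, inside every ball around id, a
  sequence without accumulation points. Choose open sets with pairwise disjoint compact
  closures C_0, C_1, ... forming a locally finite family. For each n take such a
  sequence D_n_j in Homeo_C_0(X) within 1/(n+1) of id, and F_n_j different from id in
  Homeo_C_(n+1)(X) with F_n_j tending to id. The set E of all products D_n_j F_n_j meets
  each Homeo_K(X) in a closed set: only finitely many n are involved, and a limit of
  D_n_j F_n_j would be an accumulation point of the D_n_j. So the complement W of E is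
  an open neighbourhood of id in the colimit topology. If composition were continuous
  there would be a neighbourhood V of id with V V contained in W; but V contains D_n_j
  for large n and F_n_j for large j, whose product lies in E.
*)
theory Submission
  imports Defs
begin

lemma Homeo_on_mono: "K \<subseteq> L \<Longrightarrow> Homeo_on X K \<subseteq> Homeo_on X L"
  unfolding Homeo_on_def by auto

lemma id_in_Homeo_on: "id \<in> Homeo_on X K"
  unfolding Homeo_on_def by simp

lemma comp_in_Homeo_on: "f \<in> Homeo_on X K \<Longrightarrow> g \<in> Homeo_on X K \<Longrightarrow> f \<circ> g \<in> Homeo_on X K"
  unfolding Homeo_on_def by (auto intro: homeomorphic_map_compose)

lemma Homeo_on_homeomorphic_map: "h \<in> Homeo_on X K \<Longrightarrow> homeomorphic_map X X h"
  unfolding Homeo_on_def by blast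

lemma Homeo_on_fixes: "h \<in> Homeo_on X K \<Longrightarrow> x \<notin> K \<Longrightarrow> h x = x"
  unfolding Homeo_on_def by blast

lemma Homeo_on_image_topspace: "h \<in> Homeo_on X K \<Longrightarrow> h ` topspace X = topspace X"
  by (meson Homeo_on_homeomorphic_map homeomorphic_imp_surjective_map)

lemma Homeo_on_in_topspace: "h \<in> Homeo_on X K \<Longrightarrow> x \<in> topspace X \<Longrightarrow> h x \<in> topspace X"
  using Homeo_on_image_topspace by blast

lemma Homeo_on_maps_into:
  assumes h: "h \<in> Homeo_on X K" and x: "x \<in> K"
  shows "h x \<in> K"
proof (rule ccontr)
  assume hx: "h x \<notin> K"
  then have "h (h x) = h x" using Homeo_on_fixes[OF h] by blast
  moreover have "x \<in> topspace X"
    using hx x Homeo_on_fixes[OF h, of x] h unfolding Homeo_on_def by auto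
  moreover have "inj_on h (topspace X)"
    using Homeo_on_homeomorphic_map[OF h] homeomorphic_imp_injective_map by blast
  ultimately have "h x = x" using Homeo_on_in_topspace[OF h] by (meson inj_onD)
  with x hx show False by simp
qed

lemma Homeo_on_disjoint_comp_moves:
  assumes "K \<inter> L = {}" "g \<in> Homeo_on X K" "f \<in> Homeo_on X L" "f \<noteq> id"
  shows "\<exists>x\<in>L. (g \<circ> f) x \<noteq> x"
proof -
  obtain x where x: "f x \<noteq> x" using \<open>f \<noteq> id\<close> by (metis eq_id_iff)
  then have "x \<in> L" using Homeo_on_fixes[OF assms(3)] by blast
  then have "f x \<notin> K" using Homeo_on_maps_into[OF assms(3)] assms(1) by blast
  then have "(g \<circ> f) x \<noteq> x" using Homeo_on_fixes[OF assms(2)] x by simp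
  with \<open>x \<in> L\<close> show ?thesis by blast
qed

lemma
  assumes p: "p \<in> Homeo_on X K"
  shows homeo_inv_in_Homeo_on: "homeo_inv X p \<in> Homeo_on X K"
    and comp_homeo_inv: "p \<circ> homeo_inv X p = id"
    and homeo_inv_comp: "homeo_inv X p \<circ> p = id"
proof -
  have hm: "homeomorphic_map X X p" using p by (rule Homeo_on_homeomorphic_map)
  obtain g where g: "homeomorphic_maps X X p g" using hm homeomorphic_map_maps by blast
  then have g1: "homeomorphic_map X X g" "\<forall>x \<in> topspace X. g (p x) = x" "\<forall>y \<in> topspace X. p (g y) = y"
    by (auto simp: homeomorphic_maps_map)
  have inj: "inj_on p (topspace X)" using hm homeomorphic_imp_injective_map by blast
  have gX: "g y \<in> topspace X" if "y \<in> topspace X" for y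
    using g that unfolding homeomorphic_maps_def continuous_map_def by blast
  have eq: "homeo_inv X p y = g y" if y: "y \<in> topspace X" for y
    unfolding homeo_inv_def using y inv_into_f_eq[OF inj gX[OF y]] g1(3) by simp
  show "homeo_inv X p \<in> Homeo_on X K"
    unfolding Homeo_on_def
  proof (intro CollectI conjI ballI allI impI)
    show "homeomorphic_map X X (homeo_inv X p)" using homeomorphic_map_eq[OF g1(1)] eq by metis
    fix x assume "x \<in> topspace X - K"
    then show "homeo_inv X p x = x"
      unfolding homeo_inv_def using Homeo_on_fixes[OF p] inv_into_f_eq[OF inj] by auto
  qed (simp add: homeo_inv_def)
  show "p \<circ> homeo_inv X p = id"
  proof
    fix y show "(p \<circ> homeo_inv X p) y = id y"
      using eq g1(3) p by (cases "y \<in> topspace X") (auto simp: homeo_inv_def Homeo_on_def)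
  qed
  show "homeo_inv X p \<circ> p = id"
  proof
    fix x show "(homeo_inv X p \<circ> p) x = id x"
      using eq g1(2) p Homeo_on_in_topspace[OF p]
      by (cases "x \<in> topspace X") (auto simp: homeo_inv_def Homeo_on_def)
  qed
qed

text \<open>Junk value 0 when the distances are unbounded; the inserted 0 covers S = {}.\<close>
definition sup_dist :: "'b set \<Rightarrow> ('a \<Rightarrow> 'a \<Rightarrow> real) \<Rightarrow> ('b \<Rightarrow> 'a) \<Rightarrow> ('b \<Rightarrow> 'a) \<Rightarrow> real" where
  "sup_dist S d f g = (if bdd_above ((\<lambda>x. d (f x) (g x)) ` S)
      then Sup (insert 0 ((\<lambda>x. d (f x) (g x)) ` S)) else 0)"

lemma sup_dist_nonneg: "sup_dist S d f g \<ge> 0"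
  unfolding sup_dist_def by (simp add: cSup_upper)

lemma sup_dist_upper:
  "bdd_above ((\<lambda>x. d (f x) (g x)) ` S) \<Longrightarrow> x \<in> S \<Longrightarrow> d (f x) (g x) \<le> sup_dist S d f g"
  unfolding sup_dist_def by (simp add: cSup_upper)

lemma sup_dist_le:
  "r \<ge> 0 \<Longrightarrow> (\<And>x. x \<in> S \<Longrightarrow> d (f x) (g x) \<le> r) \<Longrightarrow> sup_dist S d f g \<le> r"
  unfolding sup_dist_def
  by (subst if_P) (force simp: bdd_above_def, rule cSup_least, auto)

lemma sup_dist_comp_right:
  assumes "b ` S = S"
  shows "sup_dist S d (f \<circ> b) (g \<circ> b) = sup_dist S d f g"
proof -
  have "(\<lambda>x. d ((f \<circ> b) x) ((g \<circ> b) x)) ` S = (\<lambda>x. d (f x) (g x)) ` (b ` S)"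
    by (simp add: image_image)
  then show ?thesis unfolding sup_dist_def assms by simp
qed

lemma topspace_compact_open: "topspace (compact_open X S) = S"
proof -
  have "S \<in> {{f \<in> S. f ` C \<subseteq> U} | C U. compactin X C \<and> openin X U}"
    by (rule CollectI, rule exI[of _ "{}"], rule exI[of _ "topspace X"]) auto
  then show ?thesis unfolding compact_open_def topology_generated_by_topspace by blast
qed

lemma openin_compact_open_subbasic:
  "compactin X C \<Longrightarrow> openin X U \<Longrightarrow> openin (compact_open X S) {f \<in> S. f ` C \<subseteq> U}"
  unfolding compact_open_def openin_topology_generated_by_iff
  by (rule generate_topology_on.Basis) blast

lemma openin_colimit_topology:
  "openin (colimit_topology X) W \<longleftrightarrow> W \<subseteq> Homeo_c X \<and>
     (\<forall>K. compactin X K \<longrightarrow> openin (compact_open X (Homeo_on X K)) (W \<inter> Homeo_on X K))"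
proof -
  define P where "P U \<longleftrightarrow> U \<subseteq> Homeo_c X \<and>
     (\<forall>K. compactin X K \<longrightarrow> openin (compact_open X (Homeo_on X K)) (U \<inter> Homeo_on X K))" for U
  have "istopology P"
    unfolding istopology_def
  proof (intro conjI allI impI)
    fix S T assume "P S" "P T"
    moreover have "(S \<inter> T) \<inter> Homeo_on X K = (S \<inter> Homeo_on X K) \<inter> (T \<inter> Homeo_on X K)" for K
      by blast
    ultimately show "P (S \<inter> T)" unfolding P_def by (auto intro: openin_Int)
  next
    fix \<K> assume \<K>: "\<forall>U\<in>\<K>. P U"
    have "openin (compact_open X (Homeo_on X K)) (\<Union>\<K> \<inter> Homeo_on X K)" if "compactin X K" for K
    proof -
      have eq: "\<Union>\<K> \<inter> Homeo_on X K = (\<Union>U\<in>\<K>. U \<inter> Homeo_on X K)" by blast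
      have "openin (compact_open X (Homeo_on X K)) (\<Union>U\<in>\<K>. U \<inter> Homeo_on X K)"
        using \<K> that unfolding P_def by (intro openin_Union) auto
      then show ?thesis unfolding eq .
    qed
    then show "P (\<Union>\<K>)" using \<K> unfolding P_def by blast
  qed
  then show ?thesis unfolding colimit_topology_def P_def[symmetric] by simp
qed

lemma openin_colimit_topology_Diff_Union:
  assumes closed: "\<And>n K. compactin X K \<Longrightarrow> closedin (compact_open X (Homeo_on X K)) (E n \<inter> Homeo_on X K)"
    and finite: "\<And>K. compactin X K \<Longrightarrow> finite {n. E n \<inter> Homeo_on X K \<noteq> {}}"
  shows "openin (colimit_topology X) (Homeo_c X - (\<Union>n. E n))"
  unfolding openin_colimit_topology
proof (intro conjI allI impI)
  fix K assume K: "compactin X K"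
  define N where "N = {n. E n \<inter> Homeo_on X K \<noteq> {}}"
  have "Homeo_on X K \<subseteq> Homeo_c X" unfolding Homeo_c_def using K by blast
  then have eq: "(Homeo_c X - (\<Union>n. E n)) \<inter> Homeo_on X K =
      topspace (compact_open X (Homeo_on X K)) - (\<Union>n\<in>N. E n \<inter> Homeo_on X K)"
    unfolding topspace_compact_open N_def by blast
  have "closedin (compact_open X (Homeo_on X K)) (\<Union>n\<in>N. E n \<inter> Homeo_on X K)"
    using finite[OF K] closed[OF K] unfolding N_def by (intro closedin_Union) auto
  then show "openin (compact_open X (Homeo_on X K)) ((Homeo_c X - (\<Union>n. E n)) \<inter> Homeo_on X K)"
    unfolding eq by (rule openin_diff[OF openin_topspace])
qed blast

lemma homeo_topological_group_nhds_id_mult: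
  assumes T: "homeo_topological_group X T" and W: "openin T W" "id \<in> W"
  shows "\<exists>V. openin T V \<and> id \<in> V \<and> (\<forall>f\<in>V. \<forall>g\<in>V. f \<circ> g \<in> W)"
proof -
  define S where "S = {z \<in> topspace (prod_topology T T). (\<lambda>(f, g). f \<circ> g) z \<in> W}"
  have "continuous_map (prod_topology T T) T (\<lambda>(f, g). f \<circ> g)"
    using T unfolding homeo_topological_group_def by (rule conjunct1)
  then have "openin (prod_topology T T) S" unfolding S_def using W(1) by (rule openin_continuous_map_preimage)
  moreover have "(id, id) \<in> S" using W openin_subset unfolding S_def by fastforce
  ultimately obtain V1 V2 where V: "openin T V1" "openin T V2" "id \<in> V1" "id \<in> V2" "V1 \<times> V2 \<subseteq> S"
    unfolding openin_prod_topology_alt by meson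
  have "f \<circ> g \<in> W" if "f \<in> V1" "g \<in> V2" for f g
  proof -
    have "(f, g) \<in> S" using V(5) that by blast
    then show ?thesis unfolding S_def by simp
  qed
  moreover have "openin T (V1 \<inter> V2)" using V(1,2) by (rule openin_Int)
  ultimately show ?thesis using V(3,4) by (intro exI[of _ "V1 \<inter> V2"]) blast
qed

context Metric_space
begin

lemma Homeo_on_in_mspace: "h \<in> Homeo_on mtopology K \<Longrightarrow> x \<in> M \<Longrightarrow> h x \<in> M"
  using Homeo_on_in_topspace by fastforce

lemma sup_dist_commute: "sup_dist S d f g = sup_dist S d g f"
  unfolding sup_dist_def by (simp add: commute)

lemma dist_le_sup_dist_Homeo_on:
  assumes K: "compactin mtopology K" and f: "f \<in> Homeo_on mtopology K" and g: "g \<in> Homeo_on mtopology K"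
    and x: "x \<in> M"
  shows "d (f x) (g x) \<le> sup_dist M d f g"
proof (rule sup_dist_upper[OF _ x])
  obtain B where B: "\<forall>x\<in>K. \<forall>y\<in>K. d x y \<le> B"
    using compactin_imp_mbounded[OF K] mbounded_alt by blast
  have "d (f x) (g x) \<le> max B 0" if "x \<in> M" for x
  proof (cases "x \<in> K")
    case True
    then show ?thesis using B Homeo_on_maps_into[OF f] Homeo_on_maps_into[OF g] by (meson max.coboundedI1)
  qed (simp add: Homeo_on_fixes[OF f] Homeo_on_fixes[OF g] that)
  then show "bdd_above ((\<lambda>x. d (f x) (g x)) ` M)" by (rule bdd_aboveI2)
qed

lemma Metric_space_Homeo_on:
  assumes K: "compactin mtopology K"
  shows "Metric_space (Homeo_on mtopology K) (sup_dist M d)"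
proof
  show "0 \<le> sup_dist M d f g" for f g by (rule sup_dist_nonneg)
  show "sup_dist M d f g = sup_dist M d g f" for f g by (rule sup_dist_commute)
  fix f g h assume f: "f \<in> Homeo_on mtopology K" and g: "g \<in> Homeo_on mtopology K"
  show "sup_dist M d f g = 0 \<longleftrightarrow> f = g"
  proof
    assume 0: "sup_dist M d f g = 0"
    show "f = g"
    proof
      fix x show "f x = g x"
      proof (cases "x \<in> M")
        case True
        then have "d (f x) (g x) \<le> 0" using dist_le_sup_dist_Homeo_on[OF K f g] 0 by metis
        then show ?thesis using True Homeo_on_in_mspace f g by (meson nonneg order_antisym zero)
      next
        case False
        then have "x \<notin> K" using compactin_subset_topspace[OF K] by auto
        then show ?thesis using Homeo_on_fixes f g by metis
      qed
    qed
  next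
    assume "f = g"
    then show "sup_dist M d f g = 0"
      by (metis sup_dist_le sup_dist_nonneg order_antisym order_refl Homeo_on_in_mspace[OF f] zero)
  qed
  assume h: "h \<in> Homeo_on mtopology K"
  show "sup_dist M d f h \<le> sup_dist M d f g + sup_dist M d g h"
  proof (rule sup_dist_le)
    show "0 \<le> sup_dist M d f g + sup_dist M d g h" by (simp add: add_nonneg_nonneg sup_dist_nonneg)
    fix x assume x: "x \<in> M"
    have "d (f x) (h x) \<le> d (f x) (g x) + d (g x) (h x)"
      using triangle Homeo_on_in_mspace f g h x by blast
    also have "\<dots> \<le> sup_dist M d f g + sup_dist M d g h"
      using dist_le_sup_dist_Homeo_on[OF K f g x] dist_le_sup_dist_Homeo_on[OF K g h x] by linarith
    finally show "d (f x) (h x) \<le> sup_dist M d f g + sup_dist M d g h" .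
  qed
qed

lemma openin_sup_metric_if_openin_compact_open:
  assumes L: "compactin mtopology L"
    and S: "openin (compact_open mtopology (Homeo_on mtopology L)) S"
  shows "openin (Metric_space.mtopology (Homeo_on mtopology L) (sup_dist M d)) S"
proof -
  define G where "G = Homeo_on mtopology L"
  interpret G: Metric_space G "sup_dist M d" unfolding G_def by (rule Metric_space_Homeo_on[OF L])
  have gen: "generate_topology_on {{f \<in> G. f ` C \<subseteq> U} | C U. compactin mtopology C \<and> openin mtopology U} S"
    using S unfolding compact_open_def G_def by (simp add: openin_topology_generated_by_iff)
  show ?thesis
    unfolding G_def[symmetric]
  proof (rule generate_topology_on_coarsest[OF _ _ gen])
    show "istopology (openin G.mtopology)" by simp
    fix B assume "B \<in> {{f \<in> G. f ` C \<subseteq> U} | C U. compactin mtopology C \<and> openin mtopology U}"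
    then obtain C U where B: "B = {f \<in> G. f ` C \<subseteq> U}" and C: "compactin mtopology C" and U: "openin mtopology U"
      by blast
    show "openin G.mtopology B"
      unfolding G.openin_mtopology
    proof (intro conjI allI impI)
      show "B \<subseteq> G" using B by blast
      fix f assume "f \<in> B"
      then have f: "f \<in> G" and fCU: "f ` C \<subseteq> U" using B by auto
      have "compactin mtopology (f ` C)"
        using image_compactin[OF C] Homeo_on_homeomorphic_map f unfolding G_def
        by (meson homeomorphic_imp_continuous_map)
      then obtain e where e: "e > 0" "\<forall>x \<in> f ` C. \<exists>V\<in>{U}. mball x e \<subseteq> V"
        using lebesgue_number[of "f ` C" "{U}"] fCU U by auto
      have "G.mball f e \<subseteq> B"
      proof
        fix h assume h: "h \<in> G.mball f e"
        then have hG: "h \<in> G" and fh: "sup_dist M d f h < e" by auto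
        have "h x \<in> U" if x: "x \<in> C" for x
        proof -
          have xM: "x \<in> M" using x C compactin_subset_topspace by fastforce
          have "d (f x) (h x) \<le> sup_dist M d f h"
            using dist_le_sup_dist_Homeo_on[OF L _ _ xM] f hG unfolding G_def by blast
          then have "h x \<in> mball (f x) e"
            using fh Homeo_on_in_mspace xM f hG unfolding G_def by auto
          then show ?thesis using e(2) x by blast
        qed
        then show "h \<in> B" using B hG by blast
      qed
      then show "\<exists>r>0. G.mball f r \<subseteq> B" using e(1) by blast
    qed
  qed
qed

text \<open>By continuity of g, L is covered by finitely many balls mball x (\<delta> x / 2) such that
  the subbasic conditions f ` (L \<inter> mcball x (\<delta> x / 2)) \<subseteq> mball (g x) (e/3) hold for g and
  force sup_dist g f \<le> 2e/3.\<close>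
lemma compact_open_nbhd_in_sup_ball:
  assumes L: "compactin mtopology L" and g: "g \<in> Homeo_on mtopology L" and e: "e > 0"
  shows "\<exists>N. openin (compact_open mtopology (Homeo_on mtopology L)) N \<and> g \<in> N \<and>
             (\<forall>f\<in>N. f \<in> Homeo_on mtopology L \<and> sup_dist M d g f < e)"
proof -
  define G where "G = Homeo_on mtopology L"
  have LM: "L \<subseteq> M" using L compactin_subset_topspace by fastforce
  have "continuous_map mtopology mtopology g"
    using Homeo_on_homeomorphic_map[OF g] homeomorphic_imp_continuous_map by blast
  then have "\<forall>x\<in>M. \<exists>\<delta>>0. \<forall>y. y \<in> M \<and> d x y < \<delta> \<longrightarrow> d (g x) (g y) < e/3"
    using metric_continuous_map[OF Metric_space_axioms] e by (metis divide_pos_pos zero_less_numeral)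
  then obtain \<delta> where \<delta>: "\<And>x. x \<in> M \<Longrightarrow> \<delta> x > 0"
    "\<And>x y. x \<in> M \<Longrightarrow> y \<in> M \<Longrightarrow> d x y < \<delta> x \<Longrightarrow> d (g x) (g y) < e/3"
    by metis
  have "L \<subseteq> \<Union> ((\<lambda>x. mball x (\<delta> x / 2)) ` L)"
    using LM \<delta>(1) by force
  then obtain F0 where F0: "finite F0" "F0 \<subseteq> (\<lambda>x. mball x (\<delta> x / 2)) ` L" "L \<subseteq> \<Union> F0"
    using L unfolding compactin_def by (metis (no_types, lifting) image_iff openin_mball)
  then obtain F where F: "F \<subseteq> L" "finite F" "F0 = (\<lambda>x. mball x (\<delta> x / 2)) ` F"
    by (meson finite_subset_image)
  define B where "B x = {f \<in> G. f ` (L \<inter> mcball x (\<delta> x / 2)) \<subseteq> mball (g x) (e/3)}" for x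
  define N where "N = G \<inter> \<Inter> (B ` F)"
  have N: "openin (compact_open mtopology G) N"
    unfolding N_def
  proof (rule openin_Int_Inter)
    show "finite (B ` F)" using F by simp
    show "openin (compact_open mtopology G) G"
      using openin_topspace[of "compact_open mtopology G"] by (simp add: topspace_compact_open)
    fix K assume "K \<in> B ` F"
    then obtain x where "K = B x" by blast
    moreover have "compactin mtopology (L \<inter> mcball x (\<delta> x / 2))"
      by (metis L closed_Int_compactin closedin_mcball inf_commute)
    ultimately show "openin (compact_open mtopology G) K"
      unfolding B_def by (simp add: openin_compact_open_subbasic)
  qed
  have "g \<in> B x" if x: "x \<in> F" for x
  proof -
    have xM: "x \<in> M" using x F LM by blast
    have "g y \<in> mball (g x) (e / 3)" if y: "y \<in> L" "y \<in> mcball x (\<delta> x / 2)" for y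
      using \<delta>(1)[OF xM] \<delta>(2)[OF xM, of y] y LM Homeo_on_in_mspace[OF g] xM by force
    then show ?thesis unfolding B_def G_def using g by blast
  qed
  then have gN: "g \<in> N" unfolding N_def G_def using g by blast
  have "f \<in> Homeo_on mtopology L \<and> sup_dist M d g f < e" if fN: "f \<in> N" for f
  proof
    show f: "f \<in> Homeo_on mtopology L" using fN unfolding N_def G_def by blast
    have "sup_dist M d g f \<le> 2*e/3"
    proof (rule sup_dist_le)
      fix y assume yM: "y \<in> M"
      show "d (g y) (f y) \<le> 2 * e / 3"
      proof (cases "y \<in> L")
        case False
        then show ?thesis using Homeo_on_fixes[OF g] Homeo_on_fixes[OF f] yM e by simp
      next
        case True
        then obtain x where x: "x \<in> F" "y \<in> mball x (\<delta> x / 2)" using F F0 by blast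
        have xM: "x \<in> M" using x F LM by blast
        have "y \<in> L \<inter> mcball x (\<delta> x / 2)" using x True by auto
        moreover have "f \<in> B x" using fN x unfolding N_def by blast
        ultimately have "f y \<in> mball (g x) (e/3)" unfolding B_def by blast
        moreover have "d (g x) (g y) < e/3" using x \<delta>(1)[OF xM] \<delta>(2) xM yM by auto
        moreover have "g x \<in> M" "g y \<in> M" "f y \<in> M" using Homeo_on_in_mspace g f xM yM by auto
        ultimately show ?thesis using triangle[of "g y" "g x" "f y"] commute[of "g y" "g x"] by auto
      qed
    qed (use e in simp)
    then show "sup_dist M d g f < e" using e by simp
  qed
  then show ?thesis using N gN unfolding G_def by blast
qed

lemma openin_compact_open_if_openin_sup_metric:
  assumes L: "compactin mtopology L"
    and S: "openin (Metric_space.mtopology (Homeo_on mtopology L) (sup_dist M d)) S"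
  shows "openin (compact_open mtopology (Homeo_on mtopology L)) S"
proof -
  define G where "G = Homeo_on mtopology L"
  interpret G: Metric_space G "sup_dist M d" unfolding G_def by (rule Metric_space_Homeo_on[OF L])
  show ?thesis
  proof (subst openin_subopen, intro ballI)
    fix g assume g: "g \<in> S"
    have S': "openin G.mtopology S" using S unfolding G_def .
    then have gG: "g \<in> G" using g openin_subset by fastforce
    obtain e where e: "e > 0" "G.mball g e \<subseteq> S"
      using S' g unfolding G.openin_mtopology by blast
    obtain N where N: "openin (compact_open mtopology G) N" "g \<in> N" "\<forall>f\<in>N. f \<in> G \<and> sup_dist M d g f < e"
      using compact_open_nbhd_in_sup_ball[OF L gG[unfolded G_def] e(1)] G_def by blast
    have "N \<subseteq> S" using N(3) e(2) gG by auto
    then show "\<exists>T. openin (compact_open mtopology (Homeo_on mtopology L)) T \<and> g \<in> T \<and> T \<subseteq> S"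
      using N G_def by blast
  qed
qed

lemma compact_open_Homeo_on_eq_sup_metric:
  "compactin mtopology L \<Longrightarrow>
     compact_open mtopology (Homeo_on mtopology L) = Metric_space.mtopology (Homeo_on mtopology L) (sup_dist M d)"
  by (metis topology_eq openin_sup_metric_if_openin_compact_open openin_compact_open_if_openin_sup_metric)

lemma isolated_sequence_if_derived_set_empty:
  assumes T: "T \<subseteq> M" "infinite T" "mtopology derived_set_of T = {}"
  shows "\<exists>s::nat \<Rightarrow> 'a. inj s \<and> range s \<subseteq> T \<and> (\<forall>x\<in>M. \<exists>\<epsilon>>0. \<forall>j. d (s j) x < \<epsilon> \<longrightarrow> s j = x)"
proof -
  obtain s :: "nat \<Rightarrow> 'a" where s: "inj s" "range s \<subseteq> T"
    using infinite_countable_subset[OF T(2)] by blast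
  have "\<exists>\<epsilon>>0. \<forall>j. d (s j) x < \<epsilon> \<longrightarrow> s j = x" if x: "x \<in> M" for x
  proof -
    obtain \<epsilon> where \<epsilon>: "\<epsilon> > 0" "\<forall>y\<in>T. y \<noteq> x \<longrightarrow> y \<notin> mball x \<epsilon>"
      using T(3) x unfolding metric_derived_set_of by blast
    have "s j = x" if "d (s j) x < \<epsilon>" for j
    proof -
      have "s j \<in> T" using s(2) by blast
      moreover have "s j \<in> mball x \<epsilon>" using that \<open>s j \<in> T\<close> T(1) x commute by auto
      ultimately show ?thesis using \<epsilon>(2) by blast
    qed
    then show ?thesis using \<epsilon>(1) by blast
  qed
  then show ?thesis using s by blast
qed

lemma continuous_map_comp_right_Homeo_on:
  assumes L: "compactin mtopology L" and p: "p \<in> Homeo_on mtopology L"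
  shows "continuous_map (Metric_space.mtopology (Homeo_on mtopology L) (sup_dist M d))
           (Metric_space.mtopology (Homeo_on mtopology L) (sup_dist M d)) (\<lambda>h. h \<circ> p)"
proof -
  define H where "H = Homeo_on mtopology L"
  interpret H: Metric_space H "sup_dist M d" unfolding H_def by (rule Metric_space_Homeo_on[OF L])
  have pM: "p ` M = M" using Homeo_on_image_topspace[OF p] by simp
  have "continuous_map H.mtopology H.mtopology (\<lambda>h. h \<circ> p)"
    unfolding H.metric_continuous_map[OF H.Metric_space_axioms]
  proof (intro conjI ballI allI impI)
    show "(\<lambda>h. h \<circ> p) ` H \<subseteq> H" using comp_in_Homeo_on p unfolding H_def by blast
    fix a \<epsilon> assume "\<epsilon> > (0::real)"
    then show "\<exists>\<delta>>0. \<forall>x. x \<in> H \<and> sup_dist M d a x < \<delta> \<longrightarrow> sup_dist M d (a \<circ> p) (x \<circ> p) < \<epsilon>"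
      by (intro exI[of _ \<epsilon>]) (simp add: sup_dist_comp_right[OF pM])
  qed
  then show ?thesis unfolding H_def .
qed

lemma locally_compact_Homeo_on_if_compact_mcball:
  assumes L: "compactin mtopology L" and r: "r > 0"
    and cpt: "compactin (Metric_space.mtopology (Homeo_on mtopology L) (sup_dist M d))
                (Metric_space.mcball (Homeo_on mtopology L) (sup_dist M d) id r)"
  shows "locally_compact_space (compact_open mtopology (Homeo_on mtopology L))"
proof -
  define H where "H = Homeo_on mtopology L"
  interpret H: Metric_space H "sup_dist M d" unfolding H_def by (rule Metric_space_Homeo_on[OF L])
  have "\<exists>U K. openin H.mtopology U \<and> compactin H.mtopology K \<and> p \<in> U \<and> U \<subseteq> K" if p: "p \<in> H" for p
  proof (intro exI conjI)
    define \<tau> where "\<tau> = (\<lambda>h::'a \<Rightarrow> 'a. h \<circ> p)"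
    have "continuous_map H.mtopology H.mtopology \<tau>"
      unfolding \<tau>_def H_def by (rule continuous_map_comp_right_Homeo_on[OF L p[unfolded H_def]])
    then show "compactin H.mtopology (\<tau> ` H.mcball id r)"
      using cpt[folded H_def] by (rule image_compactin[rotated])
    show "H.mball p r \<subseteq> \<tau> ` H.mcball id r"
    proof
      fix h assume h: "h \<in> H.mball p r"
      define p' where "p' = homeo_inv mtopology p"
      have p': "p' \<in> H" "p \<circ> p' = id" "p' \<circ> p = id"
        using homeo_inv_in_Homeo_on comp_homeo_inv homeo_inv_comp p unfolding p'_def H_def by blast+
      have p'M: "p' ` M = M" using Homeo_on_image_topspace[of p' mtopology L] p'(1) unfolding H_def by simp
      have "sup_dist M d id (h \<circ> p') = sup_dist M d (p \<circ> p') (h \<circ> p')"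
        unfolding p'(2) ..
      also have "\<dots> = sup_dist M d p h" by (rule sup_dist_comp_right[OF p'M])
      finally have "sup_dist M d id (h \<circ> p') < r" using h by simp
      moreover have "h \<in> H" using h by simp
      then have "h \<circ> p' \<in> H" "id \<in> H"
        using p'(1) comp_in_Homeo_on id_in_Homeo_on unfolding H_def by auto
      ultimately have "h \<circ> p' \<in> H.mcball id r" by simp
      moreover have "\<tau> (h \<circ> p') = h" unfolding \<tau>_def comp_assoc p'(3) by simp
      ultimately show "h \<in> \<tau> ` H.mcball id r" by (metis rev_image_eqI)
    qed
    show "openin H.mtopology (H.mball p r)" by simp
    show "p \<in> H.mball p r" using p r by simp
  qed
  then have "locally_compact_space H.mtopology"
    unfolding locally_compact_space_def H.topspace_mtopology by blast
  then show ?thesis by (simp only: compact_open_Homeo_on_eq_sup_metric[OF L] H_def)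
qed

lemma isolated_sequence_near_id_Homeo_on:
  assumes L: "compactin mtopology L"
    and nlc: "\<not> locally_compact_space (compact_open mtopology (Homeo_on mtopology L))"
    and r: "r > 0"
  shows "\<exists>s::nat \<Rightarrow> 'a \<Rightarrow> 'a. inj s \<and> (\<forall>j. s j \<in> Homeo_on mtopology L \<and> sup_dist M d (s j) id < r)
          \<and> (\<forall>h\<in>Homeo_on mtopology L. \<exists>\<epsilon>>0. finite {j. sup_dist M d (s j) h < \<epsilon>})"
proof -
  define H where "H = Homeo_on mtopology L"
  interpret H: Metric_space H "sup_dist M d" unfolding H_def by (rule Metric_space_Homeo_on[OF L])
  define B where "B = H.mcball id (r/2)"
  have "\<not> compactin H.mtopology B"
  proof
    assume "compactin H.mtopology B"
    then have "locally_compact_space (compact_open mtopology H)"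
      using locally_compact_Homeo_on_if_compact_mcball[OF L, of "r/2"] r unfolding B_def H_def by simp
    with nlc show False unfolding H_def by contradiction
  qed
  then obtain T where T: "T \<subseteq> B" "infinite T" "B \<inter> H.mtopology derived_set_of T = {}"
    using H.mcball_subset_mspace unfolding H.compactin_eq_Bolzano_Weierstrass B_def by auto
  have "H.mtopology derived_set_of T \<subseteq> H.mtopology closure_of B"
    by (meson T(1) closure_of_mono derived_set_of_subset_closure_of order_trans)
  also have "\<dots> = B" unfolding B_def by (rule closure_of_closedin[OF H.closedin_mcball])
  finally have der: "H.mtopology derived_set_of T = {}" using T(3) by blast
  have "T \<subseteq> H" using T(1) H.mcball_subset_mspace unfolding B_def by blast
  from H.isolated_sequence_if_derived_set_empty[OF this T(2) der]
  obtain s :: "nat \<Rightarrow> 'a \<Rightarrow> 'a" where s: "inj s" "range s \<subseteq> T"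
      "\<forall>h\<in>H. \<exists>\<epsilon>>0. \<forall>j. sup_dist M d (s j) h < \<epsilon> \<longrightarrow> s j = h"
    by blast
  have "\<exists>\<epsilon>>0. finite {j. sup_dist M d (s j) h < \<epsilon>}" if h: "h \<in> H" for h
  proof -
    obtain \<epsilon> where \<epsilon>: "\<epsilon> > 0" "\<forall>j. sup_dist M d (s j) h < \<epsilon> \<longrightarrow> s j = h"
      using s(3) h by blast
    then have "{j. sup_dist M d (s j) h < \<epsilon>} \<subseteq> s -` {h}" by auto
    moreover have "finite (s -` {h})" using s(1) by (simp add: finite_vimageI)
    ultimately show ?thesis using \<epsilon>(1) finite_subset by blast
  qed
  moreover have "s j \<in> H \<and> sup_dist M d (s j) id < r" for j
  proof -
    have "s j \<in> B" using s(2) T(1) by blast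
    then have "s j \<in> H" "sup_dist M d id (s j) \<le> r/2" unfolding B_def by simp_all
    moreover have "sup_dist M d (s j) id = sup_dist M d id (s j)" by (rule H.commute)
    ultimately show ?thesis using r by simp
  qed
  ultimately show ?thesis using s(1) unfolding H_def by blast
qed

lemma nontrivial_Homeo_on_near_id:
  assumes L: "compactin mtopology L"
    and nlc: "\<not> locally_compact_space (compact_open mtopology (Homeo_on mtopology L))"
    and r: "r > 0"
  shows "\<exists>f\<in>Homeo_on mtopology L. f \<noteq> id \<and> sup_dist M d f id < r"
proof -
  obtain s :: "nat \<Rightarrow> 'a \<Rightarrow> 'a" where "inj s" "\<forall>j. s j \<in> Homeo_on mtopology L \<and> sup_dist M d (s j) id < r"
    using isolated_sequence_near_id_Homeo_on[OF assms] by blast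
  moreover have "s 0 \<noteq> s 1" using \<open>inj s\<close> by (simp add: inj_eq)
  ultimately show ?thesis by (metis (full_types))
qed

lemma compact_neighbourhood_if_locally_compact:
  assumes "locally_compact_space mtopology" "compactin mtopology K"
  shows "\<exists>V L. openin mtopology V \<and> compactin mtopology L \<and> K \<subseteq> V \<and> V \<subseteq> L"
  using assms locally_compact_space_compact_closed_compact[of mtopology] Hausdorff_space_mtopology by blast

lemma compact_mcball_if_locally_compact:
  assumes lc: "locally_compact_space mtopology" and x: "x \<in> M"
  shows "\<exists>s>0. compactin mtopology (mcball x s)"
proof -
  obtain V L where VL: "openin mtopology V" "compactin mtopology L" "x \<in> V" "V \<subseteq> L"
    using compact_neighbourhood_if_locally_compact[OF lc, of "{x}"] x by auto
  then obtain s where s: "s > 0" "mball x s \<subseteq> V" unfolding openin_mtopology by blast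
  have "mcball x (s/2) \<subseteq> L" using s VL mcball_subset_mball_concentric[of "s/2" s] by fastforce
  then have "compactin mtopology (mcball x (s/2))"
    using closed_compactin[OF VL(2)] closedin_mcball by blast
  then show ?thesis using s by (intro exI[of _ "s/2"]) simp
qed

lemma finite_preimage_compact_if_derived_set_empty:
  assumes a: "inj a" "range a \<subseteq> A" and A: "mtopology derived_set_of A = {}"
    and K: "compactin mtopology K"
  shows "finite {k. a k \<in> K}"
proof -
  have "finite (A \<inter> K)"
  proof (rule ccontr)
    assume "infinite (A \<inter> K)"
    then have "K \<inter> mtopology derived_set_of (A \<inter> K) \<noteq> {}"
      using compactin_imp_Bolzano_Weierstrass[OF K] by blast
    moreover have "mtopology derived_set_of (A \<inter> K) = {}"
      using derived_set_of_mono[of "A \<inter> K" A mtopology] A by blast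
    ultimately show False by blast
  qed
  then have "finite (a -` (A \<inter> K))" using finite_vimageI a(1) by blast
  moreover have "{k. a k \<in> K} \<subseteq> a -` (A \<inter> K)" using a(2) by blast
  ultimately show ?thesis using finite_subset by blast
qed

lemma finite_nat_inverse_ge: "(\<delta>::real) > 0 \<Longrightarrow> finite {k::nat. \<delta> \<le> 1 / (real k + 1)}"
proof -
  assume \<delta>: "\<delta> > 0"
  have "{k::nat. \<delta> \<le> 1 / (real k + 1)} \<subseteq> {..nat \<lceil>1/\<delta>\<rceil>}"
  proof
    fix k assume "k \<in> {k::nat. \<delta> \<le> 1 / (real k + 1)}"
    then have "real k + 1 \<le> 1/\<delta>" using \<delta> by (simp add: field_simps)
    then show "k \<in> {..nat \<lceil>1/\<delta>\<rceil>}" by simp linarith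
  qed
  then show ?thesis using finite_subset by blast
qed

lemma finite_shrinking_mcballs_meeting_compact:
  assumes lc: "locally_compact_space mtopology"
    and a: "\<And>K. compactin mtopology K \<Longrightarrow> finite {k. a k \<in> K}"
    and r: "\<And>k. r k \<le> 1 / (real k + 1)"
    and L: "compactin mtopology L"
  shows "finite {k. mcball (a k) (r k) \<inter> L \<noteq> {}}"
proof -
  obtain V K where VK: "openin mtopology V" "compactin mtopology K" "L \<subseteq> V" "V \<subseteq> K"
    using compact_neighbourhood_if_locally_compact[OF lc L] by blast
  obtain \<delta> where \<delta>: "\<delta> > 0" "\<forall>x\<in>L. mball x \<delta> \<subseteq> V"
    using lebesgue_number[OF L, of "{V}"] VK by auto
  have "{k. mcball (a k) (r k) \<inter> L \<noteq> {}} \<subseteq> {k. \<delta> \<le> 1 / (real k + 1)} \<union> {k. a k \<in> K}"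
  proof
    fix k assume "k \<in> {k. mcball (a k) (r k) \<inter> L \<noteq> {}}"
    then obtain x where x: "x \<in> mcball (a k) (r k)" "x \<in> L" by blast
    show "k \<in> {k. \<delta> \<le> 1 / (real k + 1)} \<union> {k. a k \<in> K}"
    proof (cases "\<delta> \<le> 1 / (real k + 1)")
      case False
      then have "a k \<in> mball x \<delta>" using x r[of k] commute by auto
      then show ?thesis using \<delta>(2) x VK by blast
    qed simp
  qed
  then show ?thesis using finite_nat_inverse_ge[OF \<delta>(1)] a[OF VK(2)] finite_subset by blast
qed

lemma disjoint_mcball: "r + r' < d x x' \<Longrightarrow> disjnt (mcball x r) (mcball x' r')"
  by (smt (verit) commute disjnt_iff in_mcball triangle)

text \<open>Centres of the balls are the points of a closed discrete infinite set, which exists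
  since X is not compact; radii below a third of the isolation radius make the closed balls
  disjoint, and radii tending to 0 make the family locally finite.\<close>
lemma locally_finite_disjoint_open_sequence:
  assumes lc: "locally_compact_space mtopology" and nc: "\<not> compact_space mtopology"
  shows "\<exists>U::nat \<Rightarrow> 'a set.
           (\<forall>k. openin mtopology (U k) \<and> U k \<noteq> {} \<and> compactin mtopology (mtopology closure_of U k))
         \<and> (\<forall>i j. i \<noteq> j \<longrightarrow> disjnt (mtopology closure_of U i) (mtopology closure_of U j))
         \<and> (\<forall>L. compactin mtopology L \<longrightarrow> finite {k. mtopology closure_of U k \<inter> L \<noteq> {}})"
proof -
  obtain A where A: "A \<subseteq> M" "infinite A" "mtopology derived_set_of A = {}"
    using nc unfolding compact_space_eq_Bolzano_Weierstrass by blast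
  from isolated_sequence_if_derived_set_empty[OF A]
  obtain a :: "nat \<Rightarrow> 'a" where a: "inj a" "range a \<subseteq> A"
    and isolated: "\<forall>x\<in>M. \<exists>\<epsilon>>0. \<forall>j. d (a j) x < \<epsilon> \<longrightarrow> a j = x"
    by blast
  have aM: "a k \<in> M" for k using a A by blast
  have "\<exists>\<rho>>0. \<forall>j. d (a j) (a k) < \<rho> \<longrightarrow> j = k" for k
  proof -
    obtain \<epsilon> where "\<epsilon> > 0" "\<forall>j. d (a j) (a k) < \<epsilon> \<longrightarrow> a j = a k"
      using isolated aM by blast
    then show ?thesis using a(1) by (meson injD)
  qed
  then obtain \<rho> where \<rho>: "\<And>k. \<rho> k > 0" "\<And>k j. d (a j) (a k) < \<rho> k \<Longrightarrow> j = k"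
    by metis
  obtain s where s: "\<And>k. s k > 0" "\<And>k. compactin mtopology (mcball (a k) (s k))"
    using compact_mcball_if_locally_compact[OF lc aM] by metis
  define r where "r k = min (\<rho> k / 3) (min (s k) (1 / (real k + 1)))" for k
  have r: "r k > 0" "r k \<le> \<rho> k / 3" "r k \<le> s k" "r k \<le> 1 / (real k + 1)" for k
    unfolding r_def using \<rho>(1)[of k] s(1)[of k] by auto
  define U where "U k = mball (a k) (r k)" for k
  have clU: "mtopology closure_of U k \<subseteq> mcball (a k) (r k)" for k
    unfolding U_def by (rule closure_of_minimal[OF mball_subset_mcball closedin_mcball])
  have "openin mtopology (U k) \<and> U k \<noteq> {} \<and> compactin mtopology (mtopology closure_of U k)" for k
  proof (intro conjI)
    show "openin mtopology (U k)" unfolding U_def by simp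
    show "U k \<noteq> {}" unfolding U_def using aM[of k] r(1)[of k] by auto
    have "mtopology closure_of U k \<subseteq> mcball (a k) (s k)"
      using clU[of k] mcball_subset_concentric[OF r(3)] by blast
    then show "compactin mtopology (mtopology closure_of U k)"
      by (rule closed_compactin[OF s(2)[of k]]) simp
  qed
  moreover have "disjnt (mtopology closure_of U i) (mtopology closure_of U j)" if ij: "i \<noteq> j" for i j
  proof -
    have "\<rho> i \<le> d (a j) (a i)" using \<rho>(2)[of j i] ij by force
    moreover have "\<rho> j \<le> d (a i) (a j)" using \<rho>(2)[of i j] ij by force
    ultimately have "r i + r j < d (a i) (a j)"
      using r(2)[of i] r(2)[of j] \<rho>(1)[of i] \<rho>(1)[of j] commute[of "a i" "a j"] by linarith
    then have "disjnt (mcball (a i) (r i)) (mcball (a j) (r j))" by (rule disjoint_mcball)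
    then show ?thesis using clU by (meson disjnt_subset1 disjnt_subset2)
  qed
  moreover have "finite {k. mtopology closure_of U k \<inter> L \<noteq> {}}" if L: "compactin mtopology L" for L
  proof -
    have "finite {k. mcball (a k) (r k) \<inter> L \<noteq> {}}"
      using finite_shrinking_mcballs_meeting_compact[OF lc _ r(4) L]
        finite_preimage_compact_if_derived_set_empty[OF a A(3)] by blast
    moreover have "{k. mtopology closure_of U k \<inter> L \<noteq> {}} \<subseteq> {k. mcball (a k) (r k) \<inter> L \<noteq> {}}"
      using clU by blast
    ultimately show ?thesis by (rule finite_subset[rotated])
  qed
  ultimately show ?thesis by blast
qed

lemma frequently_near_if_near_range:
  fixes y :: "nat \<Rightarrow> 'a"
  assumes g: "g \<in> M" "g \<notin> range y" and y: "\<And>j. y j \<in> M"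
    and near: "\<And>r. r > 0 \<Longrightarrow> \<exists>j. d g (y j) < r" and r: "r > 0"
  shows "\<exists>j\<ge>N. d g (y j) < r"
proof -
  define S where "S = insert r ((\<lambda>j. d g (y j)) ` {..<N})"
  have S: "finite S" "S \<noteq> {}" unfolding S_def by auto
  have "d g (y j) > 0" for j using g y by (intro mdist_pos_less) auto
  then have "Min S > 0" using S r unfolding S_def by simp
  then obtain j where j: "d g (y j) < Min S" using near by blast
  have "\<not> j < N"
  proof
    assume "j < N"
    then have "Min S \<le> d g (y j)" using S unfolding S_def by simp
    with j show False by simp
  qed
  moreover have "Min S \<le> r" using S unfolding S_def by simp
  ultimately show ?thesis using j by (intro exI[of _ j]) simp
qed

lemma closedin_range_if_asymptotic_to_isolated:
  assumes Z: "closedin mtopology Z" and x: "range x \<subseteq> Z" and y: "range y \<subseteq> M"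
    and isolated: "\<forall>z\<in>Z. \<exists>\<epsilon>>0. finite {j. d (x j) z < \<epsilon>}"
    and asymptotic: "(\<lambda>j. d (y j) (x j)) \<longlonglongrightarrow> 0"
  shows "closedin mtopology (range y)"
  unfolding closedin_metric
proof (intro conjI allI impI y)
  have xM: "x j \<in> M" for j using x closedin_subset[OF Z] by auto
  have yM: "y j \<in> M" for j using y by auto
  fix g assume g: "g \<in> M - range y"
  show "\<exists>r>0. disjnt (range y) (mball g r)"
  proof (rule ccontr)
    assume "\<not> (\<exists>r>0. disjnt (range y) (mball g r))"
    then have near: "\<exists>j. d g (y j) < r" if "r > 0" for r
      using that yM unfolding disjnt_def by fastforce
    have frequently_y: "\<exists>j\<ge>N. d g (y j) < r" if "r > 0" for r N
      using frequently_near_if_near_range[OF _ _ yM near] g that by blast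
    have frequently_x: "\<exists>j\<ge>N. d g (x j) < r" if r: "r > 0" for r N
    proof -
      have "eventually (\<lambda>j. d (y j) (x j) < r/2) sequentially"
        using order_tendstoD(2)[OF asymptotic, of "r/2"] r by simp
      then obtain N' where N': "\<And>j. j \<ge> N' \<Longrightarrow> d (y j) (x j) < r/2"
        unfolding eventually_sequentially by blast
      obtain j where j: "j \<ge> max N N'" "d g (y j) < r/2" using frequently_y r by (meson half_gt_zero)
      have "d g (x j) \<le> d g (y j) + d (y j) (x j)" using g xM yM triangle by blast
      then have "d g (x j) < r" using j N'[of j] by simp
      then show ?thesis using j(1) by (intro exI[of _ j]) simp
    qed
    have "g \<in> mtopology closure_of Z"
      unfolding metric_closure_of
    proof (intro CollectI conjI allI impI)
      show "g \<in> M" using g by blast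
      fix r :: real assume "r > 0"
      then obtain j where "d g (x j) < r" using frequently_x by blast
      then show "\<exists>z\<in>Z. z \<in> mball g r" using x xM g by (intro bexI[of _ "x j"]) auto
    qed
    then have "g \<in> Z" using closure_of_closedin[OF Z] by simp
    then obtain \<epsilon> where \<epsilon>: "\<epsilon> > 0" "finite {j. d (x j) g < \<epsilon>}" using isolated by blast
    have "\<exists>j\<ge>N. j \<in> {j. d (x j) g < \<epsilon>}" for N
      using frequently_x[OF \<epsilon>(1), of N] commute[of g] by simp
    then have "infinite {j. d (x j) g < \<epsilon>}" unfolding infinite_nat_iff_unbounded_le by blast
    with \<epsilon>(2) show False by contradiction
  qed
qed

lemma closedin_Homeo_on_sup_metric:
  assumes L: "compactin mtopology L" and KL: "K \<subseteq> L"
  shows "closedin (Metric_space.mtopology (Homeo_on mtopology L) (sup_dist M d)) (Homeo_on mtopology K)"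
proof -
  define H where "H = Homeo_on mtopology L"
  interpret H: Metric_space H "sup_dist M d" unfolding H_def by (rule Metric_space_Homeo_on[OF L])
  have "g \<in> Homeo_on mtopology K" if g: "g \<in> H.mtopology closure_of Homeo_on mtopology K" for g
  proof -
    have gH: "g \<in> H" and near: "\<forall>r>0. \<exists>h\<in>Homeo_on mtopology K. h \<in> H.mball g r"
      using g unfolding H.metric_closure_of by auto
    have "g x = x" if x: "x \<in> M - K" for x
    proof -
      have "d (g x) x < r" if r: "r > 0" for r
      proof -
        obtain h where h: "h \<in> Homeo_on mtopology K" "sup_dist M d g h < r" using near r by auto
        have "h \<in> H" using h(1) Homeo_on_mono[OF KL] unfolding H_def by blast
        then have "d (g x) (h x) \<le> sup_dist M d g h"
          using dist_le_sup_dist_Homeo_on[OF L] gH x unfolding H_def by blast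
        then show ?thesis using h Homeo_on_fixes x by fastforce
      qed
      moreover have "g x \<in> M" using Homeo_on_in_mspace gH x unfolding H_def by blast
      ultimately show ?thesis using x by (metis Diff_iff less_irrefl nonneg order_less_le zero)
    qed
    then show ?thesis using gH unfolding H_def Homeo_on_def by auto
  qed
  moreover have "Homeo_on mtopology K \<subseteq> H" unfolding H_def by (rule Homeo_on_mono[OF KL])
  ultimately have "closedin H.mtopology (Homeo_on mtopology K)"
    unfolding closure_of_subset_eq[symmetric] H.topspace_mtopology by blast
  then show ?thesis unfolding H_def .
qed

lemma sup_dist_comp_disjoint_supports:
  assumes disj: "K \<inter> L = {}" and L: "compactin mtopology L"
    and g: "g \<in> Homeo_on mtopology K" and f: "f \<in> Homeo_on mtopology L"
  shows "sup_dist M d (g \<circ> f) g \<le> sup_dist M d f id"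
proof (rule sup_dist_le[OF sup_dist_nonneg])
  fix x assume x: "x \<in> M"
  show "d ((g \<circ> f) x) (g x) \<le> sup_dist M d f id"
  proof (cases "x \<in> L")
    case True
    then have "g (f x) = f x" "g x = x"
      using Homeo_on_maps_into[OF f] Homeo_on_fixes[OF g] disj by blast+
    then have "d ((g \<circ> f) x) (g x) = d (f x) (id x)" by simp
    also have "\<dots> \<le> sup_dist M d f id" by (rule dist_le_sup_dist_Homeo_on[OF L f id_in_Homeo_on x])
    finally show ?thesis .
  next
    case False
    then show ?thesis using Homeo_on_fixes[OF f] Homeo_on_in_mspace[OF g x] sup_dist_nonneg by simp
  qed
qed

lemma closedin_range_comp_disjoint_supports:
  assumes L: "compactin mtopology L" and K: "compactin mtopology K" and K': "compactin mtopology K'"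
    and disj: "K \<inter> K' = {}"
    and D: "range D \<subseteq> Homeo_on mtopology K"
    and D_isolated: "\<forall>h\<in>Homeo_on mtopology K. \<exists>\<epsilon>>0. finite {j. sup_dist M d (D j) h < \<epsilon>}"
    and F: "range F \<subseteq> Homeo_on mtopology K'" and F_lim: "(\<lambda>j. sup_dist M d (F j) id) \<longlonglongrightarrow> 0"
  shows "closedin (compact_open mtopology (Homeo_on mtopology L)) (range (\<lambda>j. D j \<circ> F j) \<inter> Homeo_on mtopology L)"
proof -
  define L' where "L' = L \<union> K \<union> K'"
  have L': "compactin mtopology L'" unfolding L'_def using L K K' compactin_Un by blast
  define G where "G = Homeo_on mtopology L'"
  interpret G: Metric_space G "sup_dist M d" unfolding G_def by (rule Metric_space_Homeo_on[OF L'])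
  have "closedin G.mtopology (range (\<lambda>j. D j \<circ> F j))"
  proof (rule G.closedin_range_if_asymptotic_to_isolated[OF _ D _ D_isolated])
    show "closedin G.mtopology (Homeo_on mtopology K)"
      unfolding G_def by (rule closedin_Homeo_on_sup_metric[OF L']) (auto simp: L'_def)
    have "Homeo_on mtopology K \<subseteq> G" "Homeo_on mtopology K' \<subseteq> G"
      unfolding G_def L'_def by (auto intro!: Homeo_on_mono)
    then have "D j \<circ> F j \<in> G" for j
      using D F comp_in_Homeo_on unfolding G_def by (meson range_subsetD subsetD)
    then show "range (\<lambda>j. D j \<circ> F j) \<subseteq> G" by blast
    have "\<bar>sup_dist M d (D j \<circ> F j) (D j)\<bar> \<le> sup_dist M d (F j) id" for j
      using sup_dist_comp_disjoint_supports[OF disj K'] D F sup_dist_nonneg by (simp add: range_subsetD)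
    then show "(\<lambda>j. sup_dist M d (D j \<circ> F j) (D j)) \<longlonglongrightarrow> 0"
      by (intro Lim_null_comparison[OF _ F_lim]) simp
  qed
  then have closed: "closedin (subtopology G.mtopology (Homeo_on mtopology L))
               (Homeo_on mtopology L \<inter> range (\<lambda>j. D j \<circ> F j))"
    by (rule closedin_subtopology_Int_closed)
  have "Homeo_on mtopology L \<subseteq> G" unfolding G_def L'_def by (rule Homeo_on_mono) blast
  then interpret Submetric G "sup_dist M d" "Homeo_on mtopology L"
    using G.Metric_space_axioms by (simp add: Submetric_def Submetric_axioms_def)
  from closed show ?thesis
    by (simp add: compact_open_Homeo_on_eq_sup_metric[OF L] mtopology_submetric inf_commute)
qed

lemma colimit_nhds_id_contains_sup_ball:
  assumes V: "openin (colimit_topology mtopology) V" "id \<in> V" and K: "compactin mtopology K"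
  shows "\<exists>r>0. \<forall>f\<in>Homeo_on mtopology K. sup_dist M d f id < r \<longrightarrow> f \<in> V"
proof -
  define H where "H = Homeo_on mtopology K"
  interpret H: Metric_space H "sup_dist M d" unfolding H_def by (rule Metric_space_Homeo_on[OF K])
  have "openin (compact_open mtopology H) (V \<inter> H)"
    using V(1) K unfolding openin_colimit_topology H_def by blast
  then have "openin H.mtopology (V \<inter> H)"
    unfolding H_def compact_open_Homeo_on_eq_sup_metric[OF K] .
  moreover have idH: "id \<in> H" unfolding H_def by (rule id_in_Homeo_on)
  ultimately obtain r where r: "r > 0" "H.mball id r \<subseteq> V \<inter> H"
    using V(2) unfolding H.openin_mtopology by blast
  have "f \<in> V" if "f \<in> H" "sup_dist M d f id < r" for f
    using that r(2) idH H.commute[of f id] by auto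
  then show ?thesis using r(1) unfolding H_def by blast
qed

text \<open>Continuity of composition at (id, id) in the colimit topology gives a neighbourhood V
  of id with V \<circ> V \<subseteq> W, and V contains a sup-ball around id in every Homeo_K(X).\<close>
lemma Homeo_ACP_small_comp_in_nhds_id:
  assumes acp: "Homeo_ACP mtopology"
    and W: "openin (colimit_topology mtopology) W" "id \<in> W"
    and K: "compactin mtopology K" and K': "\<And>n. compactin mtopology (K' n)"
    and D: "\<And>n j. D n j \<in> Homeo_on mtopology K" "\<And>n j. sup_dist M d (D n j) id < inverse (Suc n)"
    and F: "\<And>n j. F n j \<in> Homeo_on mtopology (K' n)" "\<And>n j. sup_dist M d (F n j) id < inverse (Suc j)"
  shows "\<exists>n j. D n j \<circ> F n j \<in> W"
proof -
  obtain V where V: "openin (colimit_topology mtopology) V" "id \<in> V" "\<forall>f\<in>V. \<forall>g\<in>V. f \<circ> g \<in> W"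
    using homeo_topological_group_nhds_id_mult[OF acp[unfolded Homeo_ACP_def] W] by blast
  obtain r where r: "r > 0" "\<And>f. f \<in> Homeo_on mtopology K \<Longrightarrow> sup_dist M d f id < r \<Longrightarrow> f \<in> V"
    using colimit_nhds_id_contains_sup_ball[OF V(1,2) K] by blast
  obtain n where n: "inverse (real (Suc n)) < r" using reals_Archimedean[OF r(1)] by blast
  obtain \<delta> where \<delta>: "\<delta> > 0"
    "\<And>f. f \<in> Homeo_on mtopology (K' n) \<Longrightarrow> sup_dist M d f id < \<delta> \<Longrightarrow> f \<in> V"
    using colimit_nhds_id_contains_sup_ball[OF V(1,2) K'] by blast
  obtain j where j: "inverse (real (Suc j)) < \<delta>" using reals_Archimedean[OF \<delta>(1)] by blast
  have "D n j \<in> V" using r(2)[OF D(1)] D(2)[of n j] n by simp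
  moreover have "F n j \<in> V" using \<delta>(2)[OF F(1)] F(2)[of n j] j by simp
  ultimately show ?thesis using V(3) by blast
qed

lemma openin_colimit_Diff_products_disjoint_supports:
  assumes K0: "compactin mtopology K0" and K: "\<And>n. compactin mtopology (K n)"
    and disj: "\<And>n. K0 \<inter> K n = {}"
    and K_fin: "\<And>L. compactin mtopology L \<Longrightarrow> finite {n. K n \<inter> L \<noteq> {}}"
    and D: "\<And>n j. D n j \<in> Homeo_on mtopology K0"
    and D_isolated: "\<And>n. \<forall>h\<in>Homeo_on mtopology K0. \<exists>\<epsilon>>0. finite {j. sup_dist M d (D n j) h < \<epsilon>}"
    and F: "\<And>n j. F n j \<in> Homeo_on mtopology (K n)" "\<And>n j. F n j \<noteq> id"
      "\<And>n. (\<lambda>j. sup_dist M d (F n j) id) \<longlonglongrightarrow> 0"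
  defines "E n \<equiv> range (\<lambda>j. D n j \<circ> F n j)"
  shows "openin (colimit_topology mtopology) (Homeo_c mtopology - (\<Union>n. E n))"
    and "id \<in> Homeo_c mtopology - (\<Union>n. E n)"
proof -
  have moves: "\<exists>x\<in>K n. e x \<noteq> x" if e: "e \<in> E n" for e n
  proof -
    obtain j where "e = D n j \<circ> F n j" using e unfolding E_def by blast
    then show ?thesis using Homeo_on_disjoint_comp_moves[OF disj D(1) F(1,2)] by simp
  qed
  show "openin (colimit_topology mtopology) (Homeo_c mtopology - (\<Union>n. E n))"
  proof (rule openin_colimit_topology_Diff_Union)
    fix n L assume L: "compactin mtopology L"
    show "closedin (compact_open mtopology (Homeo_on mtopology L)) (E n \<inter> Homeo_on mtopology L)"
      unfolding E_def using D D_isolated F(1,3)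
      by (intro closedin_range_comp_disjoint_supports[OF L K0 K disj]) auto
  next
    fix L assume L: "compactin mtopology L"
    have "K n \<inter> L \<noteq> {}" if e: "e \<in> E n" and eL: "e \<in> Homeo_on mtopology L" for n e
    proof -
      obtain x where x: "x \<in> K n" "e x \<noteq> x" using moves[OF e] by blast
      then have "x \<in> L" using Homeo_on_fixes[OF eL] by blast
      with x(1) show ?thesis by blast
    qed
    then have "{n. E n \<inter> Homeo_on mtopology L \<noteq> {}} \<subseteq> {n. K n \<inter> L \<noteq> {}}" by blast
    then show "finite {n. E n \<inter> Homeo_on mtopology L \<noteq> {}}" using K_fin[OF L] by (rule finite_subset)
  qed
  have "id \<in> Homeo_c mtopology"
    using id_in_Homeo_on[of mtopology "{}"] unfolding Homeo_c_def by blast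
  moreover have "id \<notin> E n" for n using moves[of id n] by auto
  ultimately show "id \<in> Homeo_c mtopology - (\<Union>n. E n)" by blast
qed

lemma not_Homeo_ACP:
  assumes lc: "locally_compact_space mtopology" and nc: "\<not> compact_space mtopology"
    and nlc: "\<And>U. openin mtopology U \<Longrightarrow> U \<noteq> {} \<Longrightarrow> compactin mtopology (mtopology closure_of U) \<Longrightarrow>
           \<not> locally_compact_space (compact_open mtopology (Homeo_on mtopology (mtopology closure_of U)))"
  shows "\<not> Homeo_ACP mtopology"
proof
  assume acp: "Homeo_ACP mtopology"
  obtain U :: "nat \<Rightarrow> 'a set" where
    U: "\<And>k. openin mtopology (U k) \<and> U k \<noteq> {} \<and> compactin mtopology (mtopology closure_of U k)"
    and U_disj: "\<And>i j. i \<noteq> j \<Longrightarrow> disjnt (mtopology closure_of U i) (mtopology closure_of U j)"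
    and U_fin: "\<And>L. compactin mtopology L \<Longrightarrow> finite {k. mtopology closure_of U k \<inter> L \<noteq> {}}"
    using locally_finite_disjoint_open_sequence[OF lc nc] by blast
  define C where "C k = mtopology closure_of U k" for k
  have C: "compactin mtopology (C k)" "\<not> locally_compact_space (compact_open mtopology (Homeo_on mtopology (C k)))"
    for k using U nlc unfolding C_def by auto
  have disj: "C 0 \<inter> C (Suc n) = {}" for n using U_disj[of 0 "Suc n"] unfolding C_def disjnt_def by simp
  have C_fin: "finite {n. C (Suc n) \<inter> L \<noteq> {}}" if "compactin mtopology L" for L
    using finite_vimageI[OF U_fin[OF that] inj_Suc] unfolding C_def by simp
  have "\<exists>s::nat \<Rightarrow> 'a \<Rightarrow> 'a. (\<forall>j. s j \<in> Homeo_on mtopology (C 0) \<and> sup_dist M d (s j) id < inverse (Suc n))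
          \<and> (\<forall>h\<in>Homeo_on mtopology (C 0). \<exists>\<epsilon>>0. finite {j. sup_dist M d (s j) h < \<epsilon>})" for n
    using isolated_sequence_near_id_Homeo_on[OF C(1)[of 0] C(2)[of 0], of "inverse (Suc n)"] by auto
  then obtain D :: "nat \<Rightarrow> nat \<Rightarrow> 'a \<Rightarrow> 'a" where
    D: "\<And>n j. D n j \<in> Homeo_on mtopology (C 0)" "\<And>n j. sup_dist M d (D n j) id < inverse (Suc n)"
    and D_isolated: "\<And>n. \<forall>h\<in>Homeo_on mtopology (C 0). \<exists>\<epsilon>>0. finite {j. sup_dist M d (D n j) h < \<epsilon>}"
    by metis
  have "\<exists>f\<in>Homeo_on mtopology (C (Suc n)). f \<noteq> id \<and> sup_dist M d f id < inverse (Suc j)" for n j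
    using nontrivial_Homeo_on_near_id[OF C(1)[of "Suc n"] C(2)[of "Suc n"]] by simp
  then obtain F :: "nat \<Rightarrow> nat \<Rightarrow> 'a \<Rightarrow> 'a" where
    F: "\<And>n j. F n j \<in> Homeo_on mtopology (C (Suc n))" "\<And>n j. F n j \<noteq> id"
      "\<And>n j. sup_dist M d (F n j) id < inverse (Suc j)"
    by metis
  have "\<bar>sup_dist M d (F n j) id\<bar> \<le> inverse (Suc j)" for n j
    using F(3)[of n j] sup_dist_nonneg[of M d "F n j" id] by linarith
  then have F_lim: "(\<lambda>j. sup_dist M d (F n j) id) \<longlonglongrightarrow> 0" for n
    by (intro Lim_null_comparison[OF always_eventually LIMSEQ_inverse_real_of_nat]) simp
  define W where "W = Homeo_c mtopology - (\<Union>n. range (\<lambda>j. D n j \<circ> F n j))"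
  have "openin (colimit_topology mtopology) W"
    unfolding W_def by (rule openin_colimit_Diff_products_disjoint_supports(1)[where K="\<lambda>n. C (Suc n)",
        OF C(1) C(1) disj C_fin D(1) D_isolated F(1,2) F_lim])
  moreover have "id \<in> W"
    unfolding W_def by (rule openin_colimit_Diff_products_disjoint_supports(2)[where K="\<lambda>n. C (Suc n)",
        OF C(1) C(1) disj C_fin D(1) D_isolated F(1,2) F_lim])
  ultimately have "\<exists>n j. D n j \<circ> F n j \<in> W"
    by (rule Homeo_ACP_small_comp_in_nhds_id[where K'="\<lambda>n. C (Suc n)", OF acp _ _ C(1) C(1) D(1,2) F(1,3)])
  moreover have "D n j \<circ> F n j \<in> (\<Union>n. range (\<lambda>j. D n j \<circ> F n j))" for n j
    by (rule UN_I[OF UNIV_I[of n] rangeI])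
  ultimately show False unfolding W_def by blast
qed

end

theorem theoremC:
  fixes X :: "'a topology"
  assumes "locally_compact_space X"
    and "metrizable_space X"
    and "\<not> compact_space X"
    and "\<And>U. openin X U \<Longrightarrow> U \<noteq> {} \<Longrightarrow> compactin X (X closure_of U) \<Longrightarrow>
           \<not> locally_compact_space (compact_open X (Homeo_on X (X closure_of U)))"
  shows "\<not> Homeo_ACP X"
proof -
  obtain M d where ms: "Metric_space M d" and X: "X = Metric_space.mtopology M d"
    using assms(2) unfolding metrizable_space_def by blast
  show ?thesis
    using Metric_space.not_Homeo_ACP[OF ms, folded X, OF assms(1,3,4)] .
qed

end
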